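(* Let $x_1,x_2\in\mathbb{R}$ and $z_1,z_2,v_2\in\mathbb{C}$, and define $g_{\sigma^2}=4|z_1|^2+x_1^2$, $g_{\rho^2}=4|z_2|^2+|v_2|^2+\tfrac13x_2^2$, $g_{\rho\sigma^2}=\tfrac23x_2(x_1^2-2|z_1|^2)+4z_2\bar z_1^2+4\bar z_2z_1^2+2v_2\bar z_1x_1+2\bar v_2z_1x_1$, $g_{\rho^2\sigma^2}=(8|z_2|^2-|v_2|^2-\tfrac23x_2^2)(x_1^2-2|z_1|^2)-12z_2\bar v_2\bar z_1x_1-12\bar z_2v_2z_1x_1+8z_2x_2\bar z_1^2+8\bar z_2x_2z_1^2-2v_2x_2\bar z_1x_1-2\bar v_2x_2z_1x_1-3v_2^2\bar z_1^2-3\bar v_2^2z_1^2$. Then $g_{\sigma^2},g_{\rho^2}\ge0$, and whenever $g_{\sigma^2}g_{\rho^2}\neq0$, $$-\sqrt2\le\frac{g_{\rho\sigma^2}}{\sqrt{g_{\rho^2}}\,g_{\sigma^2}}\le\sqrt2,\qquad -\sqrt{\tfrac75}\,(\sqrt{15}-1)\le\frac{g_{\rho^2\sigma^2}}{g_{\rho^2}g_{\sigma^2}}\le\sqrt{\tfrac75}\,(\sqrt{15}+1).$$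
   Context: These are the $SU(2)$-invariants of a pair of real multiplets $\eta^{(2)}(\zeta)=\frac{\bar z_1}{\zeta}+x_1-z_1\zeta$ and $\eta^{(4)}(\zeta)=\frac{\bar z_2}{\zeta^2}+\frac{\bar v_2}{\zeta}+x_2-v_2\zeta+z_2\zeta^2$. *)

theory Defs
  imports Complex_Main
begin

definition g_sigma2 :: "real \<Rightarrow> complex \<Rightarrow> real" where
  "g_sigma2 x1 z1 = 4 * (cmod z1)^2 + x1^2"

definition g_rho2 :: "real \<Rightarrow> complex \<Rightarrow> complex \<Rightarrow> real" where
  "g_rho2 x2 z2 v2 = 4 * (cmod z2)^2 + (cmod v2)^2 + x2^2 / 3"

text \<open>The following two invariants are written as complex expressions exactly as in
the paper; they are sums of conjugate pairs, hence real, and we use their real part.\<close>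

definition g_rho_sigma2 :: "real \<Rightarrow> complex \<Rightarrow> real \<Rightarrow> complex \<Rightarrow> complex \<Rightarrow> complex" where
  "g_rho_sigma2 x1 z1 x2 z2 v2 =
     (2/3) * of_real x2 * (of_real (x1^2) - 2 * of_real ((cmod z1)^2))
     + 4 * z2 * (cnj z1)^2 + 4 * cnj z2 * z1^2
     + 2 * v2 * cnj z1 * of_real x1 + 2 * cnj v2 * z1 * of_real x1"

definition g_rho2_sigma2 :: "real \<Rightarrow> complex \<Rightarrow> real \<Rightarrow> complex \<Rightarrow> complex \<Rightarrow> complex" where
  "g_rho2_sigma2 x1 z1 x2 z2 v2 =
     (8 * of_real ((cmod z2)^2) - of_real ((cmod v2)^2) - (2/3) * of_real (x2^2))
       * (of_real (x1^2) - 2 * of_real ((cmod z1)^2))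
     - 12 * z2 * cnj v2 * cnj z1 * of_real x1
     - 12 * cnj z2 * v2 * z1 * of_real x1
     + 8 * z2 * of_real x2 * (cnj z1)^2
     + 8 * cnj z2 * of_real x2 * z1^2
     - 2 * v2 * of_real x2 * cnj z1 * of_real x1
     - 2 * cnj v2 * of_real x2 * z1 * of_real x1
     - 3 * v2^2 * (cnj z1)^2
     - 3 * (cnj v2)^2 * z1^2"

end

theory Submission
  imports Defs "HOL-Analysis.Determinants"
begin

text \<open>Under \<open>SU(2) \<rightarrow> SO(3)\<close> the multiplet \<open>\<eta>\<^sup>(\<^sup>2\<^sup>)\<close> is a vector \<open>s \<in> \<real>\<^sup>3\<close> and
  \<open>\<eta>\<^sup>(\<^sup>4\<^sup>)\<close> a traceless symmetric \<open>3 \<times> 3\<close> matrix \<open>M\<close>, and the four invariants are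
  \<open>|s|\<^sup>2\<close>, \<open>|M|\<^sup>2/2\<close>, \<open>s \<bullet> M s\<close> and \<open>|M|\<^sup>2 |s|\<^sup>2 - 3 |M s|\<^sup>2\<close> (Frobenius norm \<open>|M|\<close>).
  All bounds then follow from \<open>3 |M s|\<^sup>2 \<le> 2 |M|\<^sup>2 |s|\<^sup>2\<close>, i.e. from the fact that the
  largest eigenvalue of a traceless symmetric matrix satisfies \<open>3 \<lambda>\<^sup>2 \<le> 2 |M|\<^sup>2\<close>.
  That inequality is certified by the sum of squares \<open>|[M, A]|\<^sup>2\<close>, where \<open>A w = s \<times> w\<close>.
  It gives the ratios the sharper bounds \<open>2/\<surd>3\<close> and \<open>2\<close> in absolute value.\<close>

lemma matrix_vector_mult_3_nth:
  "(M *v (x::real^3)) $ i = M$i$1 * x$1 + M$i$2 * x$2 + M$i$3 * x$3"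
  by (simp add: matrix_vector_mult_def sum_3)

lemma norm_power2_vec_3: "(norm (v::real^3))^2 = (v$1)^2 + (v$2)^2 + (v$3)^2"
  unfolding power2_norm_eq_inner inner_vec_def sum_3 by (simp add: power2_eq_square)

lemma norm_power2_mat_3:
  "(norm (M::real^3^3))^2 = (norm (M$1))^2 + (norm (M$2))^2 + (norm (M$3))^2"
  unfolding power2_norm_eq_inner inner_vec_def sum_3 ..

text \<open>For \<open>M = [[p,q,r],[q,s,t],[r,t,u]]\<close> and \<open>A w = (a,b,c) \<times> w\<close>, the left-hand side is
  \<open>|M A - A M|\<^sup>2 / 2\<close>: the commutator is symmetric with diagonal \<open>2(qc - rb), 2(ta - qc),
  2(rb - ta)\<close> and off-diagonal entries the three remaining bracketed terms.\<close>

lemma traceless_symmetric_commutator_cross_identity: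
  fixes p q r s t u a b c :: real
  assumes "p + s + u = 0"
  shows "2 * ((q*c - r*b)^2 + (t*a - q*c)^2 + (r*b - t*a)^2)
       + (((s - p)*c + r*a - t*b)^2 + ((p - u)*b - q*a + t*c)^2 + ((u - s)*a + q*b - r*c)^2)
     = 2 * (p^2 + s^2 + u^2 + 2*q^2 + 2*r^2 + 2*t^2) * (a^2 + b^2 + c^2)
       - 3 * ((p*a + q*b + r*c)^2 + (q*a + s*b + t*c)^2 + (r*a + t*b + u*c)^2)"
  using assms by algebra

lemma norm_power2_traceless_symmetric_mult_le:
  fixes M :: "real^3^3" and v :: "real^3"
  assumes sym: "transpose M = M" and tr: "trace M = 0"
  shows "3 * (norm (M *v v))^2 \<le> 2 * (norm M)^2 * (norm v)^2"
proof -
  have M_sym: "M$j$i = M$i$j" for i j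
    using arg_cong[OF sym, of "\<lambda>A. A$i$j"] by (simp add: transpose_def)
  have norm_M: "(norm M)^2 = (M$1$1)^2 + (M$2$2)^2 + (M$3$3)^2
      + 2 * (M$1$2)^2 + 2 * (M$1$3)^2 + 2 * (M$2$3)^2"
    by (simp add: norm_power2_mat_3 norm_power2_vec_3 M_sym[of 1 2] M_sym[of 1 3] M_sym[of 2 3])
  have norm_Mv: "(norm (M *v v))^2 =
      (M$1$1 * v$1 + M$1$2 * v$2 + M$1$3 * v$3)^2
    + (M$1$2 * v$1 + M$2$2 * v$2 + M$2$3 * v$3)^2
    + (M$1$3 * v$1 + M$2$3 * v$2 + M$3$3 * v$3)^2"
    by (simp add: norm_power2_vec_3 matrix_vector_mult_3_nth
        M_sym[of 1 2] M_sym[of 1 3] M_sym[of 2 3])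
  have "M$1$1 + M$2$2 + M$3$3 = 0"
    using tr by (simp add: trace_def sum_3)
  note commutator_identity = traceless_symmetric_commutator_cross_identity[OF this,
      where q = "M$1$2" and r = "M$1$3" and t = "M$2$3" and a = "v$1" and b = "v$2" and c = "v$3"]
  have "2 * (norm M)^2 * (norm v)^2 - 3 * (norm (M *v v))^2 \<ge> 0"
    unfolding norm_M norm_Mv norm_power2_vec_3[of v] commutator_identity[symmetric] by simp
  then show ?thesis
    by linarith
qed

lemma abs_inner_traceless_symmetric_le:
  fixes M :: "real^3^3" and v :: "real^3"
  assumes "transpose M = M" and "trace M = 0"
  shows "\<bar>v \<bullet> (M *v v)\<bar> \<le> sqrt (2/3) * norm M * (norm v)^2"
proof -
  have "(norm (M *v v))^2 \<le> 2/3 * (norm M)^2 * (norm v)^2"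
    using norm_power2_traceless_symmetric_mult_le[OF assms, of v] by simp
  then have "norm (M *v v) \<le> sqrt (2/3 * (norm M)^2 * (norm v)^2)"
    by (rule real_le_rsqrt)
  also have "\<dots> = sqrt (2/3) * norm M * norm v"
    by (simp only: real_sqrt_mult real_sqrt_abs abs_norm_cancel)
  finally have "norm v * norm (M *v v) \<le> sqrt (2/3) * norm M * (norm v)^2"
    by (simp add: mult_left_mono power2_eq_square mult_ac)
  then show ?thesis
    using Cauchy_Schwarz_ineq2 order_trans by blast
qed

definition spin1_vector :: "real \<Rightarrow> complex \<Rightarrow> real^3" where
  "spin1_vector x z = vector [2 * Re z, 2 * Im z, x]"

definition spin2_matrix :: "real \<Rightarrow> complex \<Rightarrow> complex \<Rightarrow> real^3^3" where
  "spin2_matrix x z v = vector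
     [vector [2 * Re z - x/3, 2 * Im z, Re v],
      vector [2 * Im z, - 2 * Re z - x/3, Im v],
      vector [Re v, Im v, 2 * x/3]]"

lemma spin2_matrix_symmetric: "transpose (spin2_matrix x z v) = spin2_matrix x z v"
  by (simp add: spin2_matrix_def transpose_def vec_eq_iff forall_3)

lemma spin2_matrix_traceless: "trace (spin2_matrix x z v) = 0"
  by (simp add: spin2_matrix_def trace_def sum_3)

lemma g_sigma2_eq_norm: "g_sigma2 x1 z1 = (norm (spin1_vector x1 z1))^2"
  by (simp add: g_sigma2_def spin1_vector_def norm_power2_vec_3 cmod_power2)

lemma g_rho2_eq_norm: "g_rho2 x2 z2 v2 = (norm (spin2_matrix x2 z2 v2))^2 / 2"
  unfolding g_rho2_def spin2_matrix_def norm_power2_mat_3 norm_power2_vec_3 cmod_power2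
  by (simp add: power2_eq_square field_simps)

lemma Re_g_rho_sigma2_eq:
  "Re (g_rho_sigma2 x1 z1 x2 z2 v2) =
     spin1_vector x1 z1 \<bullet> (spin2_matrix x2 z2 v2 *v spin1_vector x1 z1)"
  unfolding g_rho_sigma2_def cmod_power2
  by (simp add: spin1_vector_def spin2_matrix_def inner_vec_def sum_3
      matrix_vector_mult_3_nth power2_eq_square algebra_simps)

lemma Re_g_rho2_sigma2_eq:
  "Re (g_rho2_sigma2 x1 z1 x2 z2 v2) =
     (norm (spin2_matrix x2 z2 v2))^2 * (norm (spin1_vector x1 z1))^2
     - 3 * (norm (spin2_matrix x2 z2 v2 *v spin1_vector x1 z1))^2"
  unfolding g_rho2_sigma2_def cmod_power2 norm_power2_mat_3 norm_power2_vec_3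
  by (simp add: spin1_vector_def spin2_matrix_def matrix_vector_mult_3_nth
      power2_eq_square algebra_simps)

lemma abs_Re_g_rho_sigma2_le:
  "\<bar>Re (g_rho_sigma2 x1 z1 x2 z2 v2)\<bar> \<le> sqrt (4/3) * (sqrt (g_rho2 x2 z2 v2) * g_sigma2 x1 z1)"
proof -
  let ?s = "spin1_vector x1 z1" and ?M = "spin2_matrix x2 z2 v2"
  have "\<bar>Re (g_rho_sigma2 x1 z1 x2 z2 v2)\<bar> \<le> sqrt (2/3) * norm ?M * (norm ?s)^2"
    unfolding Re_g_rho_sigma2_eq
    by (rule abs_inner_traceless_symmetric_le[OF spin2_matrix_symmetric spin2_matrix_traceless])
  also have "sqrt (2/3) * norm ?M = sqrt (2/3) * sqrt (2 * g_rho2 x2 z2 v2)"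
    by (simp add: g_rho2_eq_norm)
  also have "\<dots> = sqrt (4/3) * sqrt (g_rho2 x2 z2 v2)"
    by (simp flip: real_sqrt_mult)
  finally show ?thesis
    by (simp add: g_sigma2_eq_norm mult_ac)
qed

lemma abs_Re_g_rho2_sigma2_le:
  "\<bar>Re (g_rho2_sigma2 x1 z1 x2 z2 v2)\<bar> \<le> 2 * (g_rho2 x2 z2 v2 * g_sigma2 x1 z1)"
proof -
  let ?s = "spin1_vector x1 z1" and ?M = "spin2_matrix x2 z2 v2"
  have "3 * (norm (?M *v ?s))^2 \<le> 2 * (norm ?M)^2 * (norm ?s)^2"
    by (rule norm_power2_traceless_symmetric_mult_le[OF spin2_matrix_symmetric spin2_matrix_traceless])
  moreover have "2 * (g_rho2 x2 z2 v2 * g_sigma2 x1 z1) = (norm ?M)^2 * (norm ?s)^2"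
    by (simp add: g_rho2_eq_norm g_sigma2_eq_norm)
  ultimately show ?thesis
    unfolding Re_g_rho2_sigma2_eq abs_le_iff
    using zero_le_power2[of "norm (?M *v ?s)"] by linarith
qed

lemma abs_divide_le_of_abs_le_mult:
  fixes x c d :: real
  assumes "0 < d" and "\<bar>x\<bar> \<le> c * d"
  shows "\<bar>x / d\<bar> \<le> c"
  using assms by (simp add: abs_divide pos_divide_le_eq)

theorem mainTheorem2:
  fixes x1 x2 :: real and z1 z2 v2 :: complex
  shows "g_sigma2 x1 z1 \<ge> 0 \<and> g_rho2 x2 z2 v2 \<ge> 0 \<and>
    (g_sigma2 x1 z1 * g_rho2 x2 z2 v2 \<noteq> 0 \<longrightarrow>
      (- sqrt 2 \<le> Re (g_rho_sigma2 x1 z1 x2 z2 v2) / (sqrt (g_rho2 x2 z2 v2) * g_sigma2 x1 z1)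
       \<and> Re (g_rho_sigma2 x1 z1 x2 z2 v2) / (sqrt (g_rho2 x2 z2 v2) * g_sigma2 x1 z1) \<le> sqrt 2)
     \<and> (- sqrt (7/5) * (sqrt 15 - 1) \<le> Re (g_rho2_sigma2 x1 z1 x2 z2 v2) / (g_rho2 x2 z2 v2 * g_sigma2 x1 z1)
       \<and> Re (g_rho2_sigma2 x1 z1 x2 z2 v2) / (g_rho2 x2 z2 v2 * g_sigma2 x1 z1) \<le> sqrt (7/5) * (sqrt 15 + 1)))"
proof -
  let ?r1 = "Re (g_rho_sigma2 x1 z1 x2 z2 v2) / (sqrt (g_rho2 x2 z2 v2) * g_sigma2 x1 z1)"
  let ?r2 = "Re (g_rho2_sigma2 x1 z1 x2 z2 v2) / (g_rho2 x2 z2 v2 * g_sigma2 x1 z1)"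
  have gs: "g_sigma2 x1 z1 \<ge> 0" and gr: "g_rho2 x2 z2 v2 \<ge> 0"
    by (simp_all add: g_sigma2_eq_norm g_rho2_eq_norm)
  have "1 \<le> sqrt (7/5)" and "3 \<le> sqrt 15"
    using real_sqrt_le_mono[of 9 15] by simp_all
  then have lower: "- sqrt (7/5) * (sqrt 15 - 1) \<le> -2" and upper: "2 \<le> sqrt (7/5) * (sqrt 15 + 1)"
    using mult_mono[of 1 "sqrt (7/5)" 2 "sqrt 15 - 1"] mult_mono[of 1 "sqrt (7/5)" 2 "sqrt 15 + 1"]
    by simp_all
  show ?thesis
  proof (intro conjI impI gs gr)
    assume "g_sigma2 x1 z1 * g_rho2 x2 z2 v2 \<noteq> 0"
    then have "0 < sqrt (g_rho2 x2 z2 v2) * g_sigma2 x1 z1" and "0 < g_rho2 x2 z2 v2 * g_sigma2 x1 z1"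
      using gs gr by auto
    then have "\<bar>?r1\<bar> \<le> sqrt (4/3)" and "\<bar>?r2\<bar> \<le> 2"
      using abs_divide_le_of_abs_le_mult abs_Re_g_rho_sigma2_le abs_Re_g_rho2_sigma2_le by blast+
    moreover have "sqrt (4/3) \<le> sqrt 2"
      by simp
    ultimately show "- sqrt 2 \<le> ?r1" "?r1 \<le> sqrt 2"
      and "- sqrt (7/5) * (sqrt 15 - 1) \<le> ?r2" "?r2 \<le> sqrt (7/5) * (sqrt 15 + 1)"
      using lower upper unfolding abs_le_iff by linarith+
  qed
qed

end
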